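(* Assume there exists $C_1>0$ such that $E\{(v^T\mathbf Z)^4\}\leq C_1[E\{(v^T\mathbf Z)^2\}]^2$ for all $v\in\mathbb R^p$, where $\mathbf Z=(Z(t_0),\dots,Z(t_{p-1}))^T$. Let $\widehat G_\phi=\big(\frac1n\sum_{i=1}^n\tilde y_{i,\lambda}\tilde y_{i,\lambda'}\big)_{\lambda,\lambda'\in\Lambda_D}$ and $G_\phi=E[\widehat G_\phi]$. Then \[ E\big[\|\widehat G_\phi-G_\phi\|_F^2\big]\leq\frac{\max(C_1+3,6)}{n}\Big(\sum_{\lambda\in\Lambda_D}(\sigma_\lambda^2+s_\lambda^2)\Big)^2, \] where $\|\cdot\|_F$ is the Frobenius norm.
   Context: Model: $Z$ is a centered process on $[0,1]$ with continuous paths, covariance kernel $K(s,t)=E[Z(s)Z(t)]$; $Z_1,\dots,Z_n$ i.i.d. copies of $Z$; $p\ge2$, $t_h=h/(p-1)$, $h=0,\dots,p-1$; observations $Y_i(t_h)=Z_i(t_h)+\varepsilon_{i,h}$ with $\varepsilon_{i,h}$ i.i.d. $\mathcal N(0,\sigma^2)$ independent of the $Z_i$. $(\phi_\lambda)_{\lambda\in\Lambda_D}$ is a family of real functions on $[0,1]$ indexed by a finite set $\Lambda_D$; $\tilde y_{i,\lambda}=\frac1p\sum_{h=0}^{p-1}Y_i(t_h)\phi_\lambda(t_h)$; $\sigma_\lambda^2=\frac{\sigma^2}{p^2}\sum_{h=0}^{p-1}\phi_\lambda^2(t_h)$; $s_\lambda^2=\frac1{p^2}\sum_{h,h'=0}^{p-1}K(t_h,t_{h'})\phi_\lambda(t_h)\phi_\lambda(t_{h'})$.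 *)

theory Defs
  imports "HOL-Probability.Probability"
begin

definition grid :: "nat \<Rightarrow> nat \<Rightarrow> real" where
  "grid p h = real h / real (p - 1)"

definition obsY :: "nat \<Rightarrow> (nat \<Rightarrow> 'w \<Rightarrow> real \<Rightarrow> real) \<Rightarrow> (nat \<Rightarrow> nat \<Rightarrow> 'w \<Rightarrow> real)
    \<Rightarrow> nat \<Rightarrow> nat \<Rightarrow> 'w \<Rightarrow> real" where
  "obsY p Z eps i h \<omega> = Z i \<omega> (grid p h) + eps i h \<omega>"

definition ytilde :: "nat \<Rightarrow> (nat \<Rightarrow> 'w \<Rightarrow> real \<Rightarrow> real) \<Rightarrow> (nat \<Rightarrow> nat \<Rightarrow> 'w \<Rightarrow> real)
    \<Rightarrow> ('l \<Rightarrow> real \<Rightarrow> real) \<Rightarrow> nat \<Rightarrow> 'l \<Rightarrow> 'w \<Rightarrow> real" where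
  "ytilde p Z eps \<phi> i l \<omega> = (1 / real p) * (\<Sum>h<p. obsY p Z eps i h \<omega> * \<phi> l (grid p h))"

definition Ghat :: "nat \<Rightarrow> nat \<Rightarrow> (nat \<Rightarrow> 'w \<Rightarrow> real \<Rightarrow> real) \<Rightarrow> (nat \<Rightarrow> nat \<Rightarrow> 'w \<Rightarrow> real)
    \<Rightarrow> ('l \<Rightarrow> real \<Rightarrow> real) \<Rightarrow> 'l \<Rightarrow> 'l \<Rightarrow> 'w \<Rightarrow> real" where
  "Ghat n p Z eps \<phi> l l' \<omega> =
     (1 / real n) * (\<Sum>i=1..n. ytilde p Z eps \<phi> i l \<omega> * ytilde p Z eps \<phi> i l' \<omega>)"

definition covK :: "'w measure \<Rightarrow> ('w \<Rightarrow> real \<Rightarrow> real) \<Rightarrow> real \<Rightarrow> real \<Rightarrow> real" where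
  "covK M Z0 s t = (\<integral>\<omega>. Z0 \<omega> s * Z0 \<omega> t \<partial>M)"

definition sigma2 :: "real \<Rightarrow> nat \<Rightarrow> ('l \<Rightarrow> real \<Rightarrow> real) \<Rightarrow> 'l \<Rightarrow> real" where
  "sigma2 \<sigma> p \<phi> l = \<sigma>\<^sup>2 / (real p)\<^sup>2 * (\<Sum>h<p. (\<phi> l (grid p h))\<^sup>2)"

definition s2 :: "'w measure \<Rightarrow> ('w \<Rightarrow> real \<Rightarrow> real) \<Rightarrow> nat \<Rightarrow> ('l \<Rightarrow> real \<Rightarrow> real) \<Rightarrow> 'l \<Rightarrow> real" where
  "s2 M Z0 p \<phi> l = 1 / (real p)\<^sup>2 *
     (\<Sum>h<p. \<Sum>h'<p. covK M Z0 (grid p h) (grid p h') * \<phi> l (grid p h) * \<phi> l (grid p h'))"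

end

theory Submission
  imports Defs
begin

(* Each Gram entry is the empirical mean of n i.i.d. copies of F_l F_l', where
   F_l = (1/p) sum_h Y(t_h) phi_l(t_h), so its variance is at most E[(F_l F_l')^2] / n, and by
   Cauchy-Schwarz E[(F_l F_l')^2] <= sqrt (E F_l^4 E F_l'^4). Each F_l is a centred linear
   functional of Z plus an independent centred Gaussian of variance sigma_l^2; expanding the
   fourth power, the moment assumption on Z and the Gaussian identity E W^4 = 3 (E W^2)^2 give
   E F_l^4 <= max (C1 + 3) 6 (sigma_l^2 + s_l^2)^2. Summing over (l, l') gives the square of
   the sum. *)

abbreviation normal_vector :: "real \<Rightarrow> nat \<Rightarrow> (nat \<Rightarrow> real) measure" where
  "normal_vector \<sigma> p \<equiv> \<Pi>\<^sub>M h\<in>{..<p}. density lborel (normal_density 0 \<sigma>)"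

lemma prob_space_normal_vector:
  assumes "\<sigma> > 0"
  shows "prob_space (normal_vector \<sigma> p)"
  by (rule prob_space_PiM) (use prob_space_normal_density assms in auto)

lemma distr_normal_vector_coordinate:
  assumes "\<sigma> > 0" "h < p"
  shows "distr (normal_vector \<sigma> p) borel (\<lambda>e. e h) = density lborel (normal_density 0 \<sigma>)"
proof -
  have "distr (normal_vector \<sigma> p) borel (\<lambda>e. e h)
      = distr (normal_vector \<sigma> p) (density lborel (normal_density 0 \<sigma>)) (\<lambda>e. e h)"
    by (rule distr_cong) auto
  also have "\<dots> = density lborel (normal_density 0 \<sigma>)"
    by (rule distr_PiM_component) (use prob_space_normal_density assms in auto)
  finally show ?thesis .
qed

lemma distributed_normal_vector_coordinate:
  assumes "\<sigma> > 0" "h < p"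
  shows "distributed (normal_vector \<sigma> p) lborel (\<lambda>e. e h) (normal_density 0 \<sigma>)"
proof -
  have "(\<lambda>e. e h) \<in> measurable (normal_vector \<sigma> p) (density lborel (normal_density 0 \<sigma>))"
    by (rule measurable_component_singleton) (use assms in auto)
  then show ?thesis
    using distr_normal_vector_coordinate[OF assms]
    by (simp add: distributed_def distr_cong[OF refl sets_lborel[symmetric]])
qed

lemma indep_vars_normal_vector_coordinates:
  assumes "\<sigma> > 0" "p > 0"
  shows "prob_space.indep_vars (normal_vector \<sigma> p) (\<lambda>_. borel) (\<lambda>h e. e h) {..<p}"
proof -
  interpret prob_space "normal_vector \<sigma> p"
    by (rule prob_space_normal_vector) fact
  have "distr (normal_vector \<sigma> p) (\<Pi>\<^sub>M h\<in>{..<p}. borel) (\<lambda>e. \<lambda>h\<in>{..<p}. e h)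
      = distr (normal_vector \<sigma> p) (normal_vector \<sigma> p) (\<lambda>e. e)"
    by (rule distr_cong) (auto simp: space_PiM intro!: sets_PiM_cong)
  also have "\<dots> = (\<Pi>\<^sub>M h\<in>{..<p}. distr (normal_vector \<sigma> p) borel (\<lambda>e. e h))"
    using distr_normal_vector_coordinate[OF assms(1)] by (auto intro!: PiM_cong)
  finally show ?thesis
    using assms(2) by (subst indep_vars_iff_distr_eq_PiM') auto
qed

lemma distributed_normal_vector_linear_comb:
  fixes a :: "nat \<Rightarrow> real"
  assumes \<sigma>: "\<sigma> > 0" and v: "v = \<sigma>\<^sup>2 * (\<Sum>h<p. (a h)\<^sup>2)" "v > 0"
  shows "distributed (normal_vector \<sigma> p) lborel (\<lambda>e. \<Sum>h<p. a h * e h) (normal_density 0 (sqrt v))"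
proof -
  interpret prob_space "normal_vector \<sigma> p"
    by (rule prob_space_normal_vector) fact
  (* sum_indep_normal needs positive standard deviations, so only the support of a is summed. *)
  define H where "H = {h. h < p \<and> a h \<noteq> 0}"
  have sum_H: "(\<Sum>h<p. f h) = (\<Sum>h\<in>H. f h)" if "\<And>h. a h = 0 \<Longrightarrow> f h = 0" for f :: "nat \<Rightarrow> real"
    unfolding H_def by (rule sum.mono_neutral_right) (use that in auto)
  have "H \<noteq> {}"
    using v sum_H[of "\<lambda>h. (a h)\<^sup>2"] by auto
  then have "p > 0"
    by (auto simp: H_def)
  have "indep_vars (\<lambda>_. borel) (\<lambda>h e. a h * e h) H"
    by (rule indep_vars_compose2[OF indep_vars_subset[OF indep_vars_normal_vector_coordinates]])
       (use \<sigma> \<open>p > 0\<close> in \<open>auto simp: H_def\<close>)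
  moreover have "distributed (normal_vector \<sigma> p) lborel (\<lambda>e. a h * e h) (normal_density 0 (\<bar>a h\<bar> * \<sigma>))"
    if "h \<in> H" for h
    using normal_density_affine[OF distributed_normal_vector_coordinate[OF \<sigma>, of h p], of "a h" 0]
      that \<sigma> by (simp add: H_def)
  ultimately have "distributed (normal_vector \<sigma> p) lborel (\<lambda>e. \<Sum>h\<in>H. a h * e h)
      (normal_density (\<Sum>h\<in>H. 0) (sqrt (\<Sum>h\<in>H. (\<bar>a h\<bar> * \<sigma>)\<^sup>2)))"
    using \<open>H \<noteq> {}\<close> \<sigma> by (intro sum_indep_normal) (auto simp: H_def)
  moreover have "(\<Sum>h\<in>H. (\<bar>a h\<bar> * \<sigma>)\<^sup>2) = v"
    using v sum_H[of "\<lambda>h. (a h)\<^sup>2"] by (simp add: power_mult_distrib sum_distrib_left mult.commute)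
  ultimately show ?thesis
    using sum_H[of "\<lambda>h. a h * _ h"] by simp
qed

lemma normal_vector_linear_comb_moments:
  fixes a :: "nat \<Rightarrow> real" and p :: nat
  assumes \<sigma>: "\<sigma> > 0"
  defines "v \<equiv> \<sigma>\<^sup>2 * (\<Sum>h<p. (a h)\<^sup>2)"
  shows "integrable (normal_vector \<sigma> p) (\<lambda>e. (\<Sum>h<p. a h * e h) ^ k)"
    and "(\<integral>e. (\<Sum>h<p. a h * e h) \<partial>normal_vector \<sigma> p) = 0"
    and "(\<integral>e. (\<Sum>h<p. a h * e h)\<^sup>2 \<partial>normal_vector \<sigma> p) = v"
    and "(\<integral>e. (\<Sum>h<p. a h * e h) ^ 4 \<partial>normal_vector \<sigma> p) = 3 * v\<^sup>2"
proof -
  interpret prob_space "normal_vector \<sigma> p"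
    by (rule prob_space_normal_vector) fact
  have moment: "integrable (normal_vector \<sigma> p) (\<lambda>e. (\<Sum>h<p. a h * e h) ^ k) \<and>
      (\<integral>e. (\<Sum>h<p. a h * e h) ^ k \<partial>normal_vector \<sigma> p) = (\<integral>x. normal_density 0 (sqrt v) x * x ^ k \<partial>lborel)"
    if "v > 0" for k
  proof -
    note D = distributed_normal_vector_linear_comb[OF \<sigma> v_def[THEN meta_eq_to_obj_eq] that]
    have "integrable lborel (\<lambda>x. normal_density 0 (sqrt v) x * x ^ k)"
      using integrable_normal_moment[of "sqrt v" 0 k] that by simp
    then show ?thesis
      using distributed_integrable[OF D, of "\<lambda>x. x ^ k"] distributed_integral[OF D, of "\<lambda>x. x ^ k"]
      by simp
  qed
  (* normal_density 0 0 is no density: for v = 0 the combination vanishes identically instead. *)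
  have degenerate: "(\<Sum>h<p. a h * e h) = 0" if "\<not> v > 0" for e
  proof -
    have "(\<Sum>h<p. (a h)\<^sup>2) = 0"
      using that \<sigma> sum_nonneg[of "{..<p}" "\<lambda>h. (a h)\<^sup>2"]
      by (auto simp: v_def zero_less_mult_iff)
    then show ?thesis
      by (simp add: sum_nonneg_eq_0_iff)
  qed
  have v0: "v \<ge> 0"
    by (simp add: v_def sum_nonneg)
  show "integrable (normal_vector \<sigma> p) (\<lambda>e. (\<Sum>h<p. a h * e h) ^ k)"
    using moment degenerate by (cases "v > 0") (auto simp: power_0_left)
  show "(\<integral>e. (\<Sum>h<p. a h * e h) \<partial>normal_vector \<sigma> p) = 0"
    using moment[of 1] integral_normal_moment_odd[of "sqrt v" 0 0] degenerate
    by (cases "v > 0") auto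
  show "(\<integral>e. (\<Sum>h<p. a h * e h)\<^sup>2 \<partial>normal_vector \<sigma> p) = v"
    using moment[of 2] integral_normal_moment_even[of "sqrt v" 0 1] degenerate v0
    by (cases "v > 0") auto
  show "(\<integral>e. (\<Sum>h<p. a h * e h) ^ 4 \<partial>normal_vector \<sigma> p) = 3 * v\<^sup>2"
    using moment[of 4] integral_normal_moment_even[of "sqrt v" 0 2] degenerate v0
    by (cases "v > 0") (auto simp: fact_numeral power2_eq_square field_simps)
qed

lemma integral_pair_measure_mult:
  fixes u :: "'a \<Rightarrow> real" and w :: "'b \<Rightarrow> real"
  assumes "prob_space A" "prob_space B" and u: "integrable A u" and w: "integrable B w"
  shows "integrable (A \<Otimes>\<^sub>M B) (\<lambda>x. u (fst x) * w (snd x))"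
    and "(\<integral>x. u (fst x) * w (snd x) \<partial>(A \<Otimes>\<^sub>M B)) = integral\<^sup>L A u * integral\<^sup>L B w"
proof -
  interpret A: prob_space A by fact
  interpret B: prob_space B by fact
  interpret P: pair_prob_space A B ..
  have [measurable]: "u \<in> borel_measurable A" "w \<in> borel_measurable B"
    using u w by auto
  have fst: "distr (A \<Otimes>\<^sub>M B) A fst = A"
    by (rule B.distr_pair_fst)
  have snd: "distr (A \<Otimes>\<^sub>M B) B snd = B"
  proof -
    have "distr (A \<Otimes>\<^sub>M B) B snd = distr (B \<Otimes>\<^sub>M A) B (snd \<circ> (\<lambda>(x, y). (y, x)))"
      by (subst P.distr_pair_swap) (simp add: distr_distr)
    then show ?thesis
      using A.distr_pair_fst[of B] by (simp add: comp_def case_prod_beta)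
  qed
  have "P.indep_var borel (\<lambda>x. u (fst x)) borel (\<lambda>x. w (snd x))"
    unfolding P.indep_var_distribution_eq
    using distr_distr[of u A borel fst "A \<Otimes>\<^sub>M B"] distr_distr[of w B borel snd "A \<Otimes>\<^sub>M B"]
      fst snd pair_measure_distr[of u A borel w B borel]
      B.prob_space_distr[THEN prob_space_imp_sigma_finite, of w borel]
    by (simp add: comp_def split_beta')
  moreover have "integrable (A \<Otimes>\<^sub>M B) (\<lambda>x. u (fst x))" "integrable (A \<Otimes>\<^sub>M B) (\<lambda>x. w (snd x))"
    using u w integrable_distr_eq[of fst "A \<Otimes>\<^sub>M B" A u] integrable_distr_eq[of snd "A \<Otimes>\<^sub>M B" B w]
      fst snd by simp_all
  moreover have "(\<integral>x. u (fst x) \<partial>(A \<Otimes>\<^sub>M B)) = integral\<^sup>L A u"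
    "(\<integral>x. w (snd x) \<partial>(A \<Otimes>\<^sub>M B)) = integral\<^sup>L B w"
    by (subst fst[symmetric] snd[symmetric], subst integral_distr; simp)+
  ultimately show "integrable (A \<Otimes>\<^sub>M B) (\<lambda>x. u (fst x) * w (snd x))"
    "(\<integral>x. u (fst x) * w (snd x) \<partial>(A \<Otimes>\<^sub>M B)) = integral\<^sup>L A u * integral\<^sup>L B w"
    by (simp_all add: P.indep_var_integrable P.indep_var_lebesgue_integral)
qed

lemma integrable_power_le:
  fixes U :: "'a \<Rightarrow> real"
  assumes "finite_measure A" "U \<in> borel_measurable A" "integrable A (\<lambda>x. U x ^ m)"
    and "even m" "k \<le> m"
  shows "integrable A (\<lambda>x. U x ^ k)"
proof (rule Bochner_Integration.integrable_bound)
  interpret finite_measure A by fact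
  show "integrable A (\<lambda>x. 1 + U x ^ m)"
    using assms(3) by simp
  have "\<bar>y\<bar> ^ k \<le> 1 + y ^ m" for y :: real
  proof (cases "\<bar>y\<bar> \<le> 1")
    case True
    then show ?thesis
      using power_le_one[of "\<bar>y\<bar>" k] zero_le_even_power[OF \<open>even m\<close>, of y] by simp
  next
    case False
    then have "\<bar>y\<bar> ^ k \<le> \<bar>y\<bar> ^ m"
      using \<open>k \<le> m\<close> by (intro power_increasing) auto
    then show ?thesis
      using power_even_abs[OF \<open>even m\<close>, of y] by simp
  qed
  moreover have "0 \<le> 1 + y ^ m" for y :: real
    using zero_le_even_power[OF \<open>even m\<close>, of y] by simp
  ultimately show "AE x in A. norm (U x ^ k) \<le> norm (1 + U x ^ m)"
    by (simp add: power_abs)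
qed (use assms(2) in simp)

lemma weighted_square_sum_le:
  fixes s v C :: real
  assumes "s \<ge> 0" "v \<ge> 0"
  shows "C * s\<^sup>2 + 6 * s * v + 3 * v\<^sup>2 \<le> max (C + 3) 6 * (v + s)\<^sup>2"
proof -
  have "C * s\<^sup>2 \<le> max (C + 3) 6 * s\<^sup>2" "6 * (s * v) \<le> (2 * max (C + 3) 6) * (s * v)"
    "3 * v\<^sup>2 \<le> max (C + 3) 6 * v\<^sup>2"
    using assms by (intro mult_right_mono; simp)+
  then show ?thesis
    by (simp add: power2_sum algebra_simps)
qed

lemma fourth_moment_add_normal_le:
  fixes U :: "'a \<Rightarrow> real" and a :: "nat \<Rightarrow> real" and p :: nat
  assumes "prob_space A" and \<sigma>: "\<sigma> > 0"
    and U: "U \<in> borel_measurable A" "integrable A (\<lambda>x. U x ^ 4)" "(\<integral>x. U x \<partial>A) = 0"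
    and kurtosis: "(\<integral>x. U x ^ 4 \<partial>A) \<le> C * (\<integral>x. (U x)\<^sup>2 \<partial>A)\<^sup>2"
  defines "W \<equiv> \<lambda>e. \<Sum>h<p. a h * e h"
  shows "integrable (A \<Otimes>\<^sub>M normal_vector \<sigma> p) (\<lambda>x. (U (fst x) + W (snd x)) ^ 4)"
    and "(\<integral>x. (U (fst x) + W (snd x)) ^ 4 \<partial>(A \<Otimes>\<^sub>M normal_vector \<sigma> p))
          \<le> max (C + 3) 6 * (\<sigma>\<^sup>2 * (\<Sum>h<p. (a h)\<^sup>2) + (\<integral>x. (U x)\<^sup>2 \<partial>A))\<^sup>2"
proof -
  interpret A: prob_space A by fact
  interpret G: prob_space "normal_vector \<sigma> p"
    by (rule prob_space_normal_vector) fact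
  define v where "v = \<sigma>\<^sup>2 * (\<Sum>h<p. (a h)\<^sup>2)"
  define s where "s = (\<integral>x. (U x)\<^sup>2 \<partial>A)"
  have W_moments: "integrable (normal_vector \<sigma> p) (\<lambda>e. W e ^ k)"
    "(\<integral>e. W e \<partial>normal_vector \<sigma> p) = 0"
    "(\<integral>e. (W e)\<^sup>2 \<partial>normal_vector \<sigma> p) = v"
    "(\<integral>e. W e ^ 4 \<partial>normal_vector \<sigma> p) = 3 * v\<^sup>2" for k
    unfolding W_def v_def by (rule normal_vector_linear_comb_moments[OF \<sigma>])+
  have binomial: "(U (fst x) + W (snd x)) ^ 4
      = (\<Sum>k\<le>4. of_nat (4 choose k) * (U (fst x) ^ k * W (snd x) ^ (4 - k)))" for x
    by (subst binomial_ring) (simp add: mult.assoc)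
  have "integrable A (\<lambda>x. U x ^ k)" if "k \<le> 4" for k
    by (rule integrable_power_le[OF _ U(1,2)]) (use that in \<open>auto intro: A.finite_measure_axioms\<close>)
  note mixed = integral_pair_measure_mult[OF \<open>prob_space A\<close> G.prob_space_axioms this W_moments(1)]
  show "integrable (A \<Otimes>\<^sub>M normal_vector \<sigma> p) (\<lambda>x. (U (fst x) + W (snd x)) ^ 4)"
    unfolding binomial by (intro Bochner_Integration.integrable_sum integrable_mult_right mixed) auto
  have "(\<integral>x. (U (fst x) + W (snd x)) ^ 4 \<partial>(A \<Otimes>\<^sub>M normal_vector \<sigma> p))
      = (\<Sum>k\<le>4. of_nat (4 choose k) * ((\<integral>x. U x ^ k \<partial>A) * (\<integral>e. W e ^ (4 - k) \<partial>normal_vector \<sigma> p)))"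
    unfolding binomial
    by (subst Bochner_Integration.integral_sum) (auto intro!: sum.cong integrable_mult_right mixed)
  also have "\<dots> = (\<integral>x. U x ^ 4 \<partial>A) + 6 * s * v + 3 * v\<^sup>2"
    using U(3) W_moments(2-4)
    by (simp add: eval_nat_numeral s_def power2_eq_square A.prob_space G.prob_space)
  also have "\<dots> \<le> max (C + 3) 6 * (v + s)\<^sup>2"
    using kurtosis weighted_square_sum_le[of s v C] by (simp add: s_def v_def sum_nonneg)
  finally show "(\<integral>x. (U (fst x) + W (snd x)) ^ 4 \<partial>(A \<Otimes>\<^sub>M normal_vector \<sigma> p))
      \<le> max (C + 3) 6 * (\<sigma>\<^sup>2 * (\<Sum>h<p. (a h)\<^sup>2) + (\<integral>x. (U x)\<^sup>2 \<partial>A))\<^sup>2"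
    by (simp add: v_def s_def)
qed

lemma quadratic_nonneg_imp_discriminant_le:
  fixes A B C :: real
  assumes "A \<ge> 0" and nonneg: "\<And>t. 0 \<le> t\<^sup>2 * A - 2 * t * B + C"
  shows "B\<^sup>2 \<le> A * C"
proof (cases "A = 0")
  case True
  then show ?thesis
    using nonneg[of 0] nonneg[of "(C + 1) / (2 * B)"] by (cases "B = 0") auto
next
  case False
  then have "A > 0"
    using \<open>A \<ge> 0\<close> by simp
  then show ?thesis
    using nonneg[of "B / A"] by (simp add: power2_eq_square field_simps)
qed

lemma Cauchy_Schwarz_integral:
  fixes X Y :: "'a \<Rightarrow> real"
  assumes "X \<in> borel_measurable N" "Y \<in> borel_measurable N"
    and X2: "integrable N (\<lambda>x. (X x)\<^sup>2)" and Y2: "integrable N (\<lambda>x. (Y x)\<^sup>2)"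
  shows "integrable N (\<lambda>x. X x * Y x)"
    and "(\<integral>x. X x * Y x \<partial>N)\<^sup>2 \<le> (\<integral>x. (X x)\<^sup>2 \<partial>N) * (\<integral>x. (Y x)\<^sup>2 \<partial>N)"
proof -
  have bound: "\<bar>u * w\<bar> \<le> \<bar>u\<^sup>2 + w\<^sup>2\<bar>" for u w :: real
  proof -
    have "2 * (\<bar>u\<bar> * \<bar>w\<bar>) \<le> u\<^sup>2 + w\<^sup>2" "0 \<le> \<bar>u\<bar> * \<bar>w\<bar>"
      using sum_squares_bound[of "\<bar>u\<bar>" "\<bar>w\<bar>"] by (simp_all add: mult.assoc)
    then show ?thesis
      unfolding abs_mult by linarith
  qed
  show XY: "integrable N (\<lambda>x. X x * Y x)"
    by (rule Bochner_Integration.integrable_bound[where f="\<lambda>x. (X x)\<^sup>2 + (Y x)\<^sup>2"])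
       (use assms bound in auto)
  show "(\<integral>x. X x * Y x \<partial>N)\<^sup>2 \<le> (\<integral>x. (X x)\<^sup>2 \<partial>N) * (\<integral>x. (Y x)\<^sup>2 \<partial>N)"
  proof (rule quadratic_nonneg_imp_discriminant_le)
    fix t :: real
    have "(\<lambda>x. (t * X x - Y x)\<^sup>2) = (\<lambda>x. t\<^sup>2 * (X x)\<^sup>2 - 2 * t * (X x * Y x) + (Y x)\<^sup>2)"
      by (auto simp: power2_eq_square algebra_simps)
    then have "(\<integral>x. (t * X x - Y x)\<^sup>2 \<partial>N)
        = t\<^sup>2 * (\<integral>x. (X x)\<^sup>2 \<partial>N) - 2 * t * (\<integral>x. X x * Y x \<partial>N) + (\<integral>x. (Y x)\<^sup>2 \<partial>N)"
      using X2 Y2 XY by simp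
    moreover have "0 \<le> (\<integral>x. (t * X x - Y x)\<^sup>2 \<partial>N)"
      by simp
    ultimately show "0 \<le> t\<^sup>2 * (\<integral>x. (X x)\<^sup>2 \<partial>N) - 2 * t * (\<integral>x. X x * Y x \<partial>N) + (\<integral>x. (Y x)\<^sup>2 \<partial>N)"
      by simp
  qed simp
qed

lemma integral_square_product_le:
  fixes F G :: "'a \<Rightarrow> real"
  assumes "F \<in> borel_measurable N" "G \<in> borel_measurable N"
    and "integrable N (\<lambda>x. F x ^ 4)" "integrable N (\<lambda>x. G x ^ 4)"
    and F4: "(\<integral>x. F x ^ 4 \<partial>N) \<le> K * a\<^sup>2" and G4: "(\<integral>x. G x ^ 4 \<partial>N) \<le> K * b\<^sup>2"
    and "K \<ge> 0" "a \<ge> 0" "b \<ge> 0"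
  shows "integrable N (\<lambda>x. (F x * G x)\<^sup>2)"
    and "(\<integral>x. (F x * G x)\<^sup>2 \<partial>N) \<le> K * a * b"
proof -
  have fourth: "(\<lambda>x. ((H x)\<^sup>2)\<^sup>2) = (\<lambda>x. H x ^ 4)" for H :: "'a \<Rightarrow> real"
    by (simp add: power_mult[symmetric])
  note CS = Cauchy_Schwarz_integral[of "\<lambda>x. (F x)\<^sup>2" N "\<lambda>x. (G x)\<^sup>2", unfolded fourth]
  show "integrable N (\<lambda>x. (F x * G x)\<^sup>2)"
    using CS(1) assms by (simp add: power_mult_distrib)
  have "(\<integral>x. (F x * G x)\<^sup>2 \<partial>N)\<^sup>2 \<le> (\<integral>x. F x ^ 4 \<partial>N) * (\<integral>x. G x ^ 4 \<partial>N)"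
    using CS(2) assms by (simp add: power_mult_distrib)
  also have "\<dots> \<le> (K * a\<^sup>2) * (K * b\<^sup>2)"
    by (intro mult_mono F4 G4) (auto simp: zero_le_even_power \<open>K \<ge> 0\<close>)
  also have "\<dots> = (K * a * b)\<^sup>2"
    by (simp add: power2_eq_square)
  finally show "(\<integral>x. (F x * G x)\<^sup>2 \<partial>N) \<le> K * a * b"
    by (rule power2_le_imp_le) (use assms in simp)
qed

lemma (in prob_space) integral_square_sum_indep_centered:
  fixes D :: "'i \<Rightarrow> 'a \<Rightarrow> real"
  assumes "finite I" and indep: "indep_vars (\<lambda>_. borel) D I"
    and square: "\<And>i. i \<in> I \<Longrightarrow> integrable M (\<lambda>\<omega>. (D i \<omega>)\<^sup>2)"
    and centered: "\<And>i. i \<in> I \<Longrightarrow> expectation (D i) = 0"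
  shows "integrable M (\<lambda>\<omega>. (\<Sum>i\<in>I. D i \<omega>)\<^sup>2)"
    and "expectation (\<lambda>\<omega>. (\<Sum>i\<in>I. D i \<omega>)\<^sup>2) = (\<Sum>i\<in>I. expectation (\<lambda>\<omega>. (D i \<omega>)\<^sup>2))"
proof -
  have meas: "D i \<in> borel_measurable M" if "i \<in> I" for i
    using indep that by (auto simp: indep_vars_def)
  have D: "integrable M (D i)" if "i \<in> I" for i
    using integrable_power_le[OF finite_measure_axioms meas[OF that] square[OF that], of 1] by simp
  have products: "integrable M (\<lambda>\<omega>. D i \<omega> * D j \<omega>)" if "i \<in> I" "j \<in> I" for i j
    using Cauchy_Schwarz_integral(1)[OF meas[OF that(1)] meas[OF that(2)] square square] that by simp
  have uncorrelated: "expectation (\<lambda>\<omega>. D i \<omega> * D j \<omega>) = 0" if "i \<in> I" "j \<in> I" "i \<noteq> j" for i j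
  proof -
    have "expectation (\<lambda>\<omega>. \<Prod>k\<in>{i, j}. D k \<omega>) = (\<Prod>k\<in>{i, j}. expectation (D k))"
      using that D by (intro indep_vars_lebesgue_integral indep_vars_subset[OF indep]) auto
    then show ?thesis
      using that centered by simp
  qed
  have expand: "(\<lambda>\<omega>. (\<Sum>i\<in>I. D i \<omega>)\<^sup>2) = (\<lambda>\<omega>. \<Sum>i\<in>I. \<Sum>j\<in>I. D i \<omega> * D j \<omega>)"
    by (simp add: power2_eq_square sum_product)
  show "integrable M (\<lambda>\<omega>. (\<Sum>i\<in>I. D i \<omega>)\<^sup>2)"
    unfolding expand by (intro Bochner_Integration.integrable_sum products)
  have "expectation (\<lambda>\<omega>. (\<Sum>i\<in>I. D i \<omega>)\<^sup>2) = (\<Sum>i\<in>I. \<Sum>j\<in>I. expectation (\<lambda>\<omega>. D i \<omega> * D j \<omega>))"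
    unfolding expand
    by (subst Bochner_Integration.integral_sum)
       (auto intro!: Bochner_Integration.integrable_sum products sum.cong Bochner_Integration.integral_sum)
  also have "\<dots> = (\<Sum>i\<in>I. expectation (\<lambda>\<omega>. D i \<omega> * D i \<omega>))"
  proof (intro sum.cong refl)
    fix i assume "i \<in> I"
    then show "(\<Sum>j\<in>I. expectation (\<lambda>\<omega>. D i \<omega> * D j \<omega>)) = expectation (\<lambda>\<omega>. D i \<omega> * D i \<omega>)"
      using \<open>finite I\<close> uncorrelated[of i] by (subst sum.remove[of _ i]) (auto intro!: sum.neutral)
  qed
  finally show "expectation (\<lambda>\<omega>. (\<Sum>i\<in>I. D i \<omega>)\<^sup>2) = (\<Sum>i\<in>I. expectation (\<lambda>\<omega>. (D i \<omega>)\<^sup>2))"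
    by (simp add: power2_eq_square)
qed

lemma (in prob_space) integrable_integral_comp_distr:
  fixes h :: "'s \<Rightarrow> real"
  assumes V: "V \<in> measurable M S" and law: "distr M S V = N" and h: "integrable N h"
  shows "integrable M (\<lambda>\<omega>. h (V \<omega>))" "expectation (\<lambda>\<omega>. h (V \<omega>)) = (\<integral>x. h x \<partial>N)"
proof -
  have "h \<in> borel_measurable S"
    using borel_measurable_integrable[OF h] measurable_cong_sets[of N S borel borel] law by auto
  then show "integrable M (\<lambda>\<omega>. h (V \<omega>))" "expectation (\<lambda>\<omega>. h (V \<omega>)) = (\<integral>x. h x \<partial>N)"
    using integrable_distr_eq[OF V, of h] integral_distr[OF V, of h] h unfolding law by simp_all
qed

lemma (in prob_space) variance_empirical_mean_le:
  fixes V :: "nat \<Rightarrow> 'a \<Rightarrow> 's" and g :: "'s \<Rightarrow> real"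
  assumes "n \<ge> 1"
    and V: "\<And>i. i \<in> {1..n} \<Longrightarrow> V i \<in> measurable M S"
    and indep: "indep_vars (\<lambda>_. S) V {1..n}"
    and law: "\<And>i. i \<in> {1..n} \<Longrightarrow> distr M S (V i) = N"
    and g: "g \<in> borel_measurable S" "integrable N (\<lambda>x. (g x)\<^sup>2)"
  defines "mean \<equiv> \<lambda>\<omega>. (1 / real n) * (\<Sum>i=1..n. g (V i \<omega>))"
  shows "integrable M (\<lambda>\<omega>. (mean \<omega> - expectation mean)\<^sup>2)"
    and "expectation (\<lambda>\<omega>. (mean \<omega> - expectation mean)\<^sup>2) \<le> (1 / real n) * (\<integral>x. (g x)\<^sup>2 \<partial>N)"
proof -
  have "N = distr M S (V 1)"
    using law \<open>n \<ge> 1\<close> by simp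
  then interpret N: prob_space N
    using prob_space_distr[OF V[of 1]] \<open>n \<ge> 1\<close> by simp
  have "g \<in> borel_measurable N"
    using g(1) measurable_cong_sets[of N S borel borel] \<open>N = distr M S (V 1)\<close> by simp
  then have g_N: "integrable N g"
    using integrable_power_le[OF N.finite_measure_axioms _ g(2), of 1] by simp
  define c where "c = N.expectation g"
  define D where "D i \<omega> = g (V i \<omega>) - c" for i \<omega>
  note transfer = integrable_integral_comp_distr[OF V law]
  have "integrable N (\<lambda>x. (g x - c)\<^sup>2)"
    using g(2) g_N by (simp add: power2_diff)
  then have D_square: "integrable M (\<lambda>\<omega>. (D i \<omega>)\<^sup>2)" "expectation (\<lambda>\<omega>. (D i \<omega>)\<^sup>2) = N.variance g"
    if "i \<in> {1..n}" for i
    using transfer[OF that that] by (simp_all add: D_def c_def)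
  have D_centered: "expectation (D i) = 0" if "i \<in> {1..n}" for i
    using transfer[OF that that g_N] by (simp add: D_def[abs_def] c_def prob_space)
  have "expectation mean = c"
    using transfer[OF _ _ g_N] \<open>n \<ge> 1\<close> by (simp add: mean_def c_def)
  then have square: "(\<lambda>\<omega>. (mean \<omega> - expectation mean)\<^sup>2) = (\<lambda>\<omega>. (1 / real n)\<^sup>2 * (\<Sum>i=1..n. D i \<omega>)\<^sup>2)"
    using \<open>n \<ge> 1\<close> by (simp add: mean_def D_def sum_subtractf power_divide field_simps)
  have "indep_vars (\<lambda>_. borel) D {1..n}"
    unfolding D_def by (rule indep_vars_compose2[OF indep]) (use g(1) in auto)
  note sum_D = integral_square_sum_indep_centered[OF _ this D_square(1) D_centered]
  show "integrable M (\<lambda>\<omega>. (mean \<omega> - expectation mean)\<^sup>2)"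
    unfolding square using sum_D(1) by simp
  have "expectation (\<lambda>\<omega>. (mean \<omega> - expectation mean)\<^sup>2) = (1 / real n) * N.variance g"
    unfolding square using sum_D(2) D_square(2) \<open>n \<ge> 1\<close> by (simp add: power2_eq_square)
  also have "\<dots> \<le> (1 / real n) * (\<integral>x. (g x)\<^sup>2 \<partial>N)"
    using N.variance_eq[OF g_N g(2)] by (intro mult_left_mono) auto
  finally show "expectation (\<lambda>\<omega>. (mean \<omega> - expectation mean)\<^sup>2) \<le> (1 / real n) * (\<integral>x. (g x)\<^sup>2 \<partial>N)" .
qed

lemma (in prob_space) gram_error_frobenius_le:
  fixes V :: "nat \<Rightarrow> 'a \<Rightarrow> 's" and F :: "'l \<Rightarrow> 's \<Rightarrow> real"
  assumes "n \<ge> 1" "finite \<Lambda>"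
    and V: "\<And>i. i \<in> {1..n} \<Longrightarrow> V i \<in> measurable M S"
    and indep: "indep_vars (\<lambda>_. S) V {1..n}"
    and law: "\<And>i. i \<in> {1..n} \<Longrightarrow> distr M S (V i) = N"
    and F: "\<And>l. F l \<in> borel_measurable S"
    and F4: "\<And>l. integrable N (\<lambda>x. F l x ^ 4)"
    and F4_le: "\<And>l. (\<integral>x. F l x ^ 4 \<partial>N) \<le> K * (c l)\<^sup>2"
    and "K \<ge> 0" and c: "\<And>l. c l \<ge> 0"
  defines "G \<equiv> \<lambda>l l' \<omega>. (1 / real n) * (\<Sum>i=1..n. F l (V i \<omega>) * F l' (V i \<omega>))"
  shows "expectation (\<lambda>\<omega>. \<Sum>l\<in>\<Lambda>. \<Sum>l'\<in>\<Lambda>. (G l l' \<omega> - expectation (G l l'))\<^sup>2)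
      \<le> K / real n * (\<Sum>l\<in>\<Lambda>. c l)\<^sup>2"
proof -
  have "N = distr M S (V 1)"
    using law \<open>n \<ge> 1\<close> by simp
  then have "F l \<in> borel_measurable N" for l
    using F measurable_cong_sets[of N S borel borel] by simp
  note products = integral_square_product_le[OF this this F4 F4 F4_le F4_le \<open>K \<ge> 0\<close> c c]
  have "(\<lambda>x. F l x * F l' x) \<in> borel_measurable S" for l l'
    using F by measurable
  note variance = variance_empirical_mean_le[OF \<open>n \<ge> 1\<close> V indep law this products(1)]
  have entry: "integrable M (\<lambda>\<omega>. (G l l' \<omega> - expectation (G l l'))\<^sup>2)"
    "expectation (\<lambda>\<omega>. (G l l' \<omega> - expectation (G l l'))\<^sup>2)
      \<le> (1 / real n) * (\<integral>x. (F l x * F l' x)\<^sup>2 \<partial>N)" for l l'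
    using variance[of l l'] by (simp_all add: G_def)
  have "expectation (\<lambda>\<omega>. \<Sum>l\<in>\<Lambda>. \<Sum>l'\<in>\<Lambda>. (G l l' \<omega> - expectation (G l l'))\<^sup>2)
      = (\<Sum>l\<in>\<Lambda>. \<Sum>l'\<in>\<Lambda>. expectation (\<lambda>\<omega>. (G l l' \<omega> - expectation (G l l'))\<^sup>2))"
    by (subst Bochner_Integration.integral_sum)
       (auto intro!: Bochner_Integration.integrable_sum entry(1) sum.cong Bochner_Integration.integral_sum)
  also have "\<dots> \<le> (\<Sum>l\<in>\<Lambda>. \<Sum>l'\<in>\<Lambda>. (1 / real n) * (K * c l * c l'))"
    by (intro sum_mono order_trans[OF entry(2)] mult_left_mono products(2)) auto
  also have "\<dots> = K / real n * (\<Sum>l\<in>\<Lambda>. c l)\<^sup>2"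
    by (simp add: power2_eq_square sum_product sum_distrib_left algebra_simps)
  finally show ?thesis .
qed

definition grid_functional :: "nat \<Rightarrow> (nat \<Rightarrow> real) \<Rightarrow> (real \<Rightarrow> real) \<times> (nat \<Rightarrow> real) \<Rightarrow> real" where
  "grid_functional p a x = (\<Sum>h<p. a h * (fst x (grid p h) + snd x h))"

lemma grid_in_unit_interval: "h < p \<Longrightarrow> grid p h \<in> {0..1}"
  by (cases "p = 1") (auto simp: grid_def divide_le_eq_1)

lemma ytilde_eq_grid_functional:
  "ytilde p Z eps \<phi> i l \<omega>
    = grid_functional p (\<lambda>h. \<phi> l (grid p h) / real p) (Z i \<omega>, \<lambda>h\<in>{..<p}. eps i h \<omega>)"
  unfolding ytilde_def obsY_def grid_functional_def
  by (auto simp: sum_distrib_left algebra_simps intro!: sum.cong)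

lemma measurable_grid_functional [measurable]:
  "grid_functional p a \<in> borel_measurable ((\<Pi>\<^sub>M t\<in>UNIV. borel) \<Otimes>\<^sub>M (\<Pi>\<^sub>M h\<in>{..<p}. borel))"
  unfolding grid_functional_def by measurable

lemma sigma2_eq: "sigma2 \<sigma> p \<phi> l = \<sigma>\<^sup>2 * (\<Sum>h<p. (\<phi> l (grid p h) / real p)\<^sup>2)"
  unfolding sigma2_def by (simp add: power_divide sum_divide_distrib[symmetric])

lemma s2_eq_second_moment:
  assumes Z0_meas: "\<And>t. (\<lambda>\<omega>. Z0 \<omega> t) \<in> borel_measurable M"
    and Z0_sq: "\<And>t. t \<in> {0..1} \<Longrightarrow> integrable M (\<lambda>\<omega>. (Z0 \<omega> t)\<^sup>2)"
  shows "s2 M Z0 p \<phi> l = (\<integral>\<omega>. (\<Sum>h<p. \<phi> l (grid p h) / real p * Z0 \<omega> (grid p h))\<^sup>2 \<partial>M)"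
proof -
  define a where "a h = \<phi> l (grid p h) / real p" for h
  have "integrable M (\<lambda>\<omega>. Z0 \<omega> (grid p h) * Z0 \<omega> (grid p h'))" if "h < p" "h' < p" for h h'
    using Cauchy_Schwarz_integral(1)[OF Z0_meas Z0_meas Z0_sq Z0_sq] grid_in_unit_interval that by simp
  then have "(\<integral>\<omega>. (\<Sum>h<p. a h * Z0 \<omega> (grid p h))\<^sup>2 \<partial>M)
      = (\<Sum>h<p. \<Sum>h'<p. a h * a h' * covK M Z0 (grid p h) (grid p h'))"
    unfolding covK_def power2_eq_square sum_product
    by (subst Bochner_Integration.integral_sum)
       (auto intro!: Bochner_Integration.integrable_sum sum.cong simp: Bochner_Integration.integral_sum
         mult.assoc mult.left_commute)
  also have "\<dots> = s2 M Z0 p \<phi> l"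
    unfolding s2_def a_def by (simp add: sum_distrib_left power2_eq_square algebra_simps)
  finally show ?thesis
    by (simp add: a_def)
qed

lemma fourth_moment_grid_functional_le:
  fixes M :: "'w measure" and Z0 :: "'w \<Rightarrow> real \<Rightarrow> real" and a :: "nat \<Rightarrow> real"
  assumes "prob_space M" "\<sigma> > 0"
    and Z0_meas: "\<And>t. (\<lambda>\<omega>. Z0 \<omega> t) \<in> borel_measurable M"
    and Z0_centered: "\<And>t. t \<in> {0..1} \<Longrightarrow> integrable M (\<lambda>\<omega>. Z0 \<omega> t) \<and> (\<integral>\<omega>. Z0 \<omega> t \<partial>M) = 0"
    and moment4: "integrable M (\<lambda>\<omega>. (\<Sum>h<p. a h * Z0 \<omega> (grid p h)) ^ 4)"
      "(\<integral>\<omega>. (\<Sum>h<p. a h * Z0 \<omega> (grid p h)) ^ 4 \<partial>M)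
        \<le> C * (\<integral>\<omega>. (\<Sum>h<p. a h * Z0 \<omega> (grid p h))\<^sup>2 \<partial>M)\<^sup>2"
  defines "N \<equiv> distr M (\<Pi>\<^sub>M t\<in>UNIV. borel) Z0 \<Otimes>\<^sub>M normal_vector \<sigma> p"
  shows "integrable N (\<lambda>x. grid_functional p a x ^ 4)"
    and "(\<integral>x. grid_functional p a x ^ 4 \<partial>N)
      \<le> max (C + 3) 6 * (\<sigma>\<^sup>2 * (\<Sum>h<p. (a h)\<^sup>2) + (\<integral>\<omega>. (\<Sum>h<p. a h * Z0 \<omega> (grid p h))\<^sup>2 \<partial>M))\<^sup>2"
proof -
  interpret prob_space M by fact
  define U where "U f = (\<Sum>h<p. a h * f (grid p h))" for f :: "real \<Rightarrow> real"
  have "(\<lambda>\<omega>. \<lambda>t. Z0 \<omega> t) \<in> measurable M (\<Pi>\<^sub>M t\<in>UNIV. borel)"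
    by (rule measurable_PiM_single') (use Z0_meas in auto)
  then have Z0: "Z0 \<in> measurable M (\<Pi>\<^sub>M t\<in>UNIV. borel)"
    by simp
  have U: "U \<in> borel_measurable (\<Pi>\<^sub>M t\<in>UNIV. borel)"
    unfolding U_def by measurable
  then have U_law: "integrable (distr M (\<Pi>\<^sub>M t\<in>UNIV. borel) Z0) (\<lambda>f. U f ^ k) \<longleftrightarrow> integrable M (\<lambda>\<omega>. U (Z0 \<omega>) ^ k)"
    "(\<integral>f. U f ^ k \<partial>distr M (\<Pi>\<^sub>M t\<in>UNIV. borel) Z0) = (\<integral>\<omega>. U (Z0 \<omega>) ^ k \<partial>M)" for k
    by (simp_all add: integrable_distr_eq[OF Z0] integral_distr[OF Z0])
  have "(\<integral>\<omega>. U (Z0 \<omega>) \<partial>M) = (\<Sum>h<p. a h * (\<integral>\<omega>. Z0 \<omega> (grid p h) \<partial>M))"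
    unfolding U_def using Z0_centered grid_in_unit_interval by (subst Bochner_Integration.integral_sum) auto
  then have U0: "(\<integral>f. U f \<partial>distr M (\<Pi>\<^sub>M t\<in>UNIV. borel) Z0) = 0"
    using Z0_centered grid_in_unit_interval U_law(2)[of 1] by simp
  have "U \<in> borel_measurable (distr M (\<Pi>\<^sub>M t\<in>UNIV. borel) Z0)"
    using U by simp
  note bound = fourth_moment_add_normal_le[OF prob_space_distr[OF Z0] \<open>\<sigma> > 0\<close> this _ U0, where C=C and a=a and p=p]
  have "grid_functional p a x = U (fst x) + (\<Sum>h<p. a h * snd x h)" for x
    by (simp add: grid_functional_def U_def distrib_left sum.distrib)
  then show "integrable N (\<lambda>x. grid_functional p a x ^ 4)"
    "(\<integral>x. grid_functional p a x ^ 4 \<partial>N)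
      \<le> max (C + 3) 6 * (\<sigma>\<^sup>2 * (\<Sum>h<p. (a h)\<^sup>2) + (\<integral>\<omega>. (\<Sum>h<p. a h * Z0 \<omega> (grid p h))\<^sup>2 \<partial>M))\<^sup>2"
    using bound moment4 U_law[of 4] U_law[of 2] by (simp_all add: N_def U_def)
qed

theorem lemma1:
  fixes M :: "'w measure"
    and Z0 :: "'w \<Rightarrow> real \<Rightarrow> real"
    and Z :: "nat \<Rightarrow> 'w \<Rightarrow> real \<Rightarrow> real"
    and eps :: "nat \<Rightarrow> nat \<Rightarrow> 'w \<Rightarrow> real"
    and \<sigma> C1 :: real and n p :: nat
    and \<Lambda> :: "'l set" and \<phi> :: "'l \<Rightarrow> real \<Rightarrow> real"
  assumes M: "prob_space M"
    and n: "n \<ge> 1" and p: "p \<ge> 2" and sigma: "\<sigma> > 0"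
    and Lam: "finite \<Lambda>"
    \<comment> \<open>the generic process Z: measurable, continuous paths, centered, second moments\<close>
    and Z0_meas: "\<And>t. (\<lambda>\<omega>. Z0 \<omega> t) \<in> borel_measurable M"
    and Z0_cont: "\<And>\<omega>. \<omega> \<in> space M \<Longrightarrow> continuous_on {0..1} (Z0 \<omega>)"
    and Z0_centered: "\<And>t. t \<in> {0..1} \<Longrightarrow>
          integrable M (\<lambda>\<omega>. Z0 \<omega> t) \<and> (\<integral>\<omega>. Z0 \<omega> t \<partial>M) = 0"
    and Z0_sq: "\<And>t. t \<in> {0..1} \<Longrightarrow> integrable M (\<lambda>\<omega>. (Z0 \<omega> t)\<^sup>2)"
    \<comment> \<open>the copies and noise: measurable, continuous paths\<close>
    and Z_meas: "\<And>i t. (\<lambda>\<omega>. Z i \<omega> t) \<in> borel_measurable M"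
    and Z_cont: "\<And>i \<omega>. i \<in> {1..n} \<Longrightarrow> \<omega> \<in> space M \<Longrightarrow> continuous_on {0..1} (Z i \<omega>)"
    and eps_meas: "\<And>i h. eps i h \<in> borel_measurable M"
    \<comment> \<open>for each i, (Z_i, eps_{i,0..p-1}) has law  Law(Z) x N(0,sigma^2)^p :
        Z_i is a copy of Z, independent of the i.i.d. Gaussian noise\<close>
    and law: "\<And>i. i \<in> {1..n} \<Longrightarrow>
        distr M ((\<Pi>\<^sub>M t\<in>UNIV. borel) \<Otimes>\<^sub>M (\<Pi>\<^sub>M h\<in>{..<p}. borel))
          (\<lambda>\<omega>. (Z i \<omega>, \<lambda>h\<in>{..<p}. eps i h \<omega>))
        = distr M (\<Pi>\<^sub>M t\<in>UNIV. borel) Z0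
            \<Otimes>\<^sub>M (\<Pi>\<^sub>M h\<in>{..<p}. density lborel (normal_density 0 \<sigma>))"
    \<comment> \<open>independence across i = 1..n\<close>
    and indep: "prob_space.indep_vars M
        (\<lambda>_. (\<Pi>\<^sub>M t\<in>UNIV. borel) \<Otimes>\<^sub>M (\<Pi>\<^sub>M h\<in>{..<p}. borel))
        (\<lambda>i \<omega>. (Z i \<omega>, \<lambda>h\<in>{..<p}. eps i h \<omega>)) {1..n}"
    \<comment> \<open>fourth-moment condition on the vector (Z(t_0),...,Z(t_{p-1}))\<close>
    and C1: "C1 > 0"
    and moment4: "\<And>v :: nat \<Rightarrow> real.
        integrable M (\<lambda>\<omega>. (\<Sum>h<p. v h * Z0 \<omega> (grid p h)) ^ 4) \<and>
        (\<integral>\<omega>. (\<Sum>h<p. v h * Z0 \<omega> (grid p h)) ^ 4 \<partial>M)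
          \<le> C1 * (\<integral>\<omega>. (\<Sum>h<p. v h * Z0 \<omega> (grid p h))\<^sup>2 \<partial>M)\<^sup>2"
  shows "(\<integral>\<omega>. (\<Sum>l\<in>\<Lambda>. \<Sum>l'\<in>\<Lambda>.
             (Ghat n p Z eps \<phi> l l' \<omega> - (\<integral>\<omega>'. Ghat n p Z eps \<phi> l l' \<omega>' \<partial>M))\<^sup>2) \<partial>M)
         \<le> max (C1 + 3) 6 / real n *
            (\<Sum>l\<in>\<Lambda>. sigma2 \<sigma> p \<phi> l + s2 M Z0 p \<phi> l)\<^sup>2"
proof -
  interpret prob_space M by (rule M)
  define S where "S = (\<Pi>\<^sub>M t\<in>(UNIV :: real set). (borel :: real measure))
    \<Otimes>\<^sub>M (\<Pi>\<^sub>M h\<in>{..<p}. (borel :: real measure))"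
  define V where "V i \<omega> = (Z i \<omega>, \<lambda>h\<in>{..<p}. eps i h \<omega>)" for i \<omega>
  define a where "a l h = \<phi> l (grid p h) / real p" for l h
  define c where "c l = sigma2 \<sigma> p \<phi> l + s2 M Z0 p \<phi> l" for l
  have "(\<lambda>\<omega>. \<lambda>t. Z i \<omega> t) \<in> measurable M (\<Pi>\<^sub>M t\<in>UNIV. borel)"
    "(\<lambda>\<omega>. \<lambda>h\<in>{..<p}. eps i h \<omega>) \<in> measurable M (\<Pi>\<^sub>M h\<in>{..<p}. borel)" for i
    by (rule measurable_PiM_single' measurable_restrict; use Z_meas eps_meas in auto)+
  then have V_meas: "V i \<in> measurable M S" for i
    unfolding V_def S_def by (intro measurable_Pair) auto
  have c_eq: "c l = \<sigma>\<^sup>2 * (\<Sum>h<p. (a l h)\<^sup>2) + (\<integral>\<omega>. (\<Sum>h<p. a l h * Z0 \<omega> (grid p h))\<^sup>2 \<partial>M)" for l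
    using s2_eq_second_moment[OF Z0_meas Z0_sq] by (simp add: c_def a_def sigma2_eq)
  note moments = fourth_moment_grid_functional_le[OF M sigma Z0_meas Z0_centered
      conjunct1[OF moment4] conjunct2[OF moment4], where a="a l" for l, folded c_eq]
  have "c l \<ge> 0" for l
    unfolding c_eq by (simp add: sum_nonneg)
  note error = gram_error_frobenius_le[OF n Lam V_meas indep[folded S_def V_def] law[folded S_def V_def]
      measurable_grid_functional[of p, folded S_def] moments _ this]
  have "Ghat n p Z eps \<phi> l l' = (\<lambda>\<omega>. (1 / real n) *
      (\<Sum>i=1..n. grid_functional p (a l) (V i \<omega>) * grid_functional p (a l') (V i \<omega>)))" for l l'
    unfolding Ghat_def ytilde_eq_grid_functional V_def a_def ..
  then show ?thesis
    using error by (simp add: c_def)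
qed

end
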